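(* Let $\mathcal{M}\subset\mathbb{R}^n$ be a locally symmetric $C^2$ submanifold and let $\sigma_*$ be a characteristic permutation of $\mathcal{M}$. Then every set in the partition $P(\sigma_* )$ consists of consecutive integers of $\mathbb{N}_n$.
   Context: $\Sigma^n$ is the group of permutations of $\mathbb{N}_n=\{1,\dots,n\}$, acting on $\mathbb{R}^n$ by $(\sigma x)_i=x_{\sigma^{-1}(i)}$. $P(\sigma)$ is the partition of $\mathbb{N}_n$ into the orbits of $\sigma$. For $x\in\mathbb{R}^n$, $P(x)$ is the partition in which $i,j$ lie in the same set iff $x_i=x_j$; $\Delta(\sigma)=\{x:P(x)=P(\sigma)\}$. $\mathbb{R}^n_{\ge}=\{x:x_1\ge\cdots\ge x_n\}$; $B(x,\delta)$ is the open Euclidean ball. A set $S\subset\mathbb{R}^n$ is locally symmetric if $S\cap\mathbb{R}^n_{\ge}\ne\emptyset$ and for every $x\in S$ there is $\delta>0$ with $\sigma(S\cap B(x,\delta))=S\cap B(x,\delta)$ for all $y\in S\cap B(x,\delta)$ and all $\sigma$ with $\sigma y=y$. A locally symmetric $C^2$ submanifold is a connected $C^2$ submanifold of $\mathbb{R}^n$ without boundary which is a locally symmetric set. A characteristic permutation of $\mathcal{M}$ is a $\sigma_*\in\Sigma^n$ for which there exist $\bar x\in\mathcal{M}$ and $\delta>0$ with $\mathcal{M}\cap B(\bar x,\delta)\subset\Delta(\sigma_* )$. *)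

theory Defs
  imports "HOL-Analysis.Analysis"
begin

text \<open>R^n is modelled as real^'n, where the index type 'n is a finite linearly
ordered type (order-isomorphic to {1..n}); permutations of N_n are the
permutations of UNIV :: 'n set.\<close>

definition perm_act :: "('n::finite \<Rightarrow> 'n) \<Rightarrow> real^'n \<Rightarrow> real^'n" where
  "perm_act \<sigma> x = (\<chi> i. x $ (inv \<sigma> i))"

definition perm_partition :: "('n::finite \<Rightarrow> 'n) \<Rightarrow> 'n set set" where
  "perm_partition \<sigma> = (\<lambda>i. {j. \<exists>k::nat. (\<sigma> ^^ k) i = j}) ` UNIV"

definition vec_partition :: "real^'n::finite \<Rightarrow> 'n set set" where
  "vec_partition x = (\<lambda>i. {j. x $ j = x $ i}) ` UNIV"

definition Delta :: "('n::finite \<Rightarrow> 'n) \<Rightarrow> (real^'n) set" where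
  "Delta \<sigma> = {x. vec_partition x = perm_partition \<sigma>}"

definition ordered_cone :: "(real^'n::{finite,linorder}) set" where
  "ordered_cone = {x. \<forall>i j. i \<le> j \<longrightarrow> x $ j \<le> x $ i}"

definition locally_symmetric :: "(real^'n::{finite,linorder}) set \<Rightarrow> bool" where
  "locally_symmetric S \<longleftrightarrow>
     S \<inter> ordered_cone \<noteq> {} \<and>
     (\<forall>x\<in>S. \<exists>\<delta>>0. \<forall>y\<in>S \<inter> ball x \<delta>. \<forall>\<sigma>.
        \<sigma> permutes (UNIV :: 'n set) \<and> perm_act \<sigma> y = y \<longrightarrow>
        perm_act \<sigma> ` (S \<inter> ball x \<delta>) = S \<inter> ball x \<delta>)"

definition C2_on :: "('a::euclidean_space \<Rightarrow> 'b::euclidean_space) \<Rightarrow> 'a set \<Rightarrow> bool" where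
  "C2_on f U \<longleftrightarrow> (\<exists>f' f''.
     (\<forall>x\<in>U. (f has_derivative blinfun_apply (f' x)) (at x)) \<and>
     (\<forall>x\<in>U. (f' has_derivative blinfun_apply (f'' x)) (at x)) \<and>
     continuous_on U f'')"

definition C2_submanifold :: "('a::euclidean_space) set \<Rightarrow> bool" where
  "C2_submanifold M \<longleftrightarrow>
     (\<forall>x\<in>M. \<exists>U W (L::'a set) (\<phi>::'a \<Rightarrow> 'a) (\<psi>::'a \<Rightarrow> 'a). open U \<and> x \<in> U \<and> open W \<and> subspace L \<and>
        C2_on \<phi> U \<and> C2_on \<psi> W \<and> \<phi> ` U = W \<and>
        (\<forall>y\<in>U. \<psi> (\<phi> y) = y) \<and> (\<forall>z\<in>W. \<phi> (\<psi> z) = z) \<and>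
        \<phi> ` (M \<inter> U) = W \<inter> L)"

definition locally_symmetric_C2_submanifold :: "(real^'n::{finite,linorder}) set \<Rightarrow> bool" where
  "locally_symmetric_C2_submanifold M \<longleftrightarrow>
     connected M \<and> C2_submanifold M \<and> locally_symmetric M"

definition characteristic_perm :: "(real^'n::{finite,linorder}) set \<Rightarrow> ('n \<Rightarrow> 'n) \<Rightarrow> bool" where
  "characteristic_perm M \<sigma> \<longleftrightarrow> \<sigma> permutes (UNIV :: 'n set) \<and>
     (\<exists>xb\<in>M. \<exists>\<delta>>0. M \<inter> ball xb \<delta> \<subseteq> Delta \<sigma>)"

end

theory Submission
  imports Defs
begin

text \<open>Coordinate equalities x_p = x_q propagate along a connected locally symmetric
C^2 submanifold M: the set of points near which M lies in the hyperplane x_p = x_q is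
open, and it is closed because at a limit point y the tangent space of M lies in the
hyperplane, so the transposition (p q), which fixes y and is a local symmetry of M,
acts on M near y as an isometric involution that is the identity to first order, hence
is the identity there. At a point near which M lies in Delta(sigma) the coordinates are
constant on the orbits of sigma, so this holds on all of M. If i < j < k with i, k in one
orbit and j outside, take x in M on the ordered cone: x_i = x_k forces x_j = x_k, so
(j k) is a local symmetry at x, which turns x_i = x_k into x_i = x_j near x, hence on
all of M, contradicting the block structure of Delta(sigma).\<close>

lemma perm_act_nth [simp]: "perm_act \<sigma> x $ i = x $ inv \<sigma> i"
  by (simp add: perm_act_def)

lemma linear_perm_act: "linear (perm_act \<sigma>)"
  by (rule linearI) (simp_all add: vec_eq_iff)

lemma norm_perm_act:
  assumes "\<sigma> permutes UNIV"
  shows "norm (perm_act \<sigma> x) = norm x"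
proof -
  have "inv \<sigma> permutes UNIV"
    using assms by (rule permutes_inv)
  then have "(\<Sum>i\<in>UNIV. (x $ inv \<sigma> i)\<^sup>2) = (\<Sum>i\<in>UNIV. (x $ i)\<^sup>2)"
    using sum.permute[of "inv \<sigma>" UNIV "\<lambda>i. (x $ i)\<^sup>2"] by (simp add: comp_def)
  then show ?thesis
    by (simp add: norm_vec_def L2_set_def real_norm_def)
qed

lemma perm_act_transpose_involutive [simp]:
  "perm_act (Transposition.transpose p q) (perm_act (Transposition.transpose p q) x) = x"
  by (simp add: vec_eq_iff)

lemma perm_act_transpose_fixed_iff:
  "perm_act (Transposition.transpose p q) x = x \<longleftrightarrow> x $ p = x $ q"
  by (auto simp: vec_eq_iff Transposition.transpose_def)

lemma continuous_derivative_linearization_bound: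
  fixes f :: "'a::real_normed_vector \<Rightarrow> 'b::real_normed_vector"
  assumes "open S" "x0 \<in> S"
    and deriv: "\<And>x. x \<in> S \<Longrightarrow> (f has_derivative blinfun_apply (f' x)) (at x)"
    and cont: "continuous (at x0) f'" and "e > 0"
  obtains r where "r > 0" "ball x0 r \<subseteq> S"
    "\<And>a b. a \<in> ball x0 r \<Longrightarrow> b \<in> ball x0 r \<Longrightarrow>
       norm (f a - f b - f' x0 (a - b)) \<le> e * norm (a - b)"
proof -
  obtain r1 where r1: "r1 > 0" "\<And>x. dist x x0 < r1 \<Longrightarrow> dist (f' x) (f' x0) < e"
    using cont \<open>e > 0\<close> unfolding continuous_at_eps_delta by blast
  obtain r2 where r2: "r2 > 0" "ball x0 r2 \<subseteq> S"
    using assms(1,2) open_contains_ball by blast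
  define r where "r = min r1 r2"
  have r: "r > 0" "ball x0 r \<subseteq> S"
    using r1 r2 by (auto simp: r_def)
  have "norm (f a - f b - f' x0 (a - b)) \<le> e * norm (a - b)"
    if ab: "a \<in> ball x0 r" "b \<in> ball x0 r" for a b
  proof -
    have "norm (f a - f b - f' x0 (a - b)) \<le> norm (a - b) * e"
    proof (rule differentiable_bound_linearization)
      show "b + t *\<^sub>R (a - b) \<in> ball x0 r" if "t \<in> {0..1}" for t
        using convexD_alt[OF convex_ball[of x0 r] ab(2,1), of t] \<open>t \<in> {0..1}\<close>
        by (simp add: algebra_simps)
      show "(f has_derivative blinfun_apply (f' x)) (at x within ball x0 r)"
        if "x \<in> ball x0 r" for x
        using deriv r(2) that by (blast intro: has_derivative_at_withinI)
      show "onorm (blinfun_apply (f' x) - blinfun_apply (f' x0)) \<le> e"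
        if "x \<in> ball x0 r" for x
      proof -
        have "dist (f' x) (f' x0) < e"
          using r1(2)[of x] that by (simp add: r_def dist_commute)
        moreover have "blinfun_apply (f' x) - blinfun_apply (f' x0) = blinfun_apply (f' x - f' x0)"
          by (simp add: fun_eq_iff blinfun.diff_left)
        ultimately show ?thesis
          by (simp add: dist_norm norm_blinfun.rep_eq[symmetric])
      qed
      show "x0 \<in> ball x0 r" using r(1) by simp
    qed
    then show ?thesis by (simp add: mult.commute)
  qed
  with r that show ?thesis by blast
qed

lemma has_derivative_zero_if_constant_on_subspace:
  fixes f :: "'a::real_normed_vector \<Rightarrow> real"
  assumes deriv: "(f has_derivative f') (at x)" and "subspace V" "x \<in> V" "\<epsilon> > 0"
    and const: "\<And>w. w \<in> V \<Longrightarrow> dist w x < \<epsilon> \<Longrightarrow> f w = f x" and "v \<in> V"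
  shows "f' v = 0"
proof -
  define d where "d = \<epsilon> / (norm v + 1)"
  have lin: "linear f'"
    using deriv by (rule has_derivative_linear)
  have "((\<lambda>t. x + t *\<^sub>R v) has_derivative (\<lambda>t. t *\<^sub>R v)) (at 0)"
    by (auto intro!: derivative_eq_intros)
  then have "((\<lambda>t. f (x + t *\<^sub>R v)) has_derivative (\<lambda>t. f' (t *\<^sub>R v))) (at 0)"
    using deriv by (auto intro: has_derivative_compose)
  then have "((\<lambda>t. f (x + t *\<^sub>R v)) has_real_derivative f' v) (at 0)"
    using lin by (simp add: has_field_derivative_def linear_scale mult.commute[of _ "f' v"])
  moreover have "d > 0"
    using \<open>\<epsilon> > 0\<close> by (simp add: d_def add_nonneg_pos)
  moreover have "\<forall>t. \<bar>0 - t\<bar> < d \<longrightarrow> f (x + 0 *\<^sub>R v) = f (x + t *\<^sub>R v)"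
  proof (intro allI impI)
    fix t assume "\<bar>0 - t\<bar> < d"
    have "norm (t *\<^sub>R v) = \<bar>t\<bar> * norm v"
      by simp
    also have "\<dots> \<le> d * norm v"
      using \<open>\<bar>0 - t\<bar> < d\<close> by (intro mult_right_mono) auto
    also have "\<dots> < \<epsilon>"
      using \<open>\<epsilon> > 0\<close> by (simp add: d_def divide_less_eq add_nonneg_pos)
    finally have "dist (x + t *\<^sub>R v) x < \<epsilon>"
      by (simp add: dist_norm)
    moreover have "x + t *\<^sub>R v \<in> V"
      using assms(2,3,6) by (simp add: subspace_add subspace_scale)
    ultimately show "f (x + 0 *\<^sub>R v) = f (x + t *\<^sub>R v)"
      using const by simp
  qed
  ultimately show ?thesis
    by (rule DERIV_local_const)
qed

lemma eq_if_isometric_involution_swaps_values: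
  fixes g :: "'a::real_normed_vector \<Rightarrow> 'a" and f D :: "'b::real_normed_vector \<Rightarrow> 'a"
    and E :: "'a \<Rightarrow> 'b"
  assumes "linear g" "\<And>x. g (g x) = x" and norm_g: "\<And>x. norm (g x) = norm x"
    and swap: "f b = g (f a)" and fixed: "g (D (a - b)) = D (a - b)"
    and approx: "norm (f a - f b - D (a - b)) \<le> e * norm (a - b)"
    and inverse: "E (D (a - b)) = a - b" and bound: "\<And>u. norm (E u) \<le> C * norm u"
    and "0 \<le> C" "C * e < 1"
  shows "a = b"
proof -
  define u where "u = D (a - b)"
  define r where "r = f a - f b - u"
  have "g r = f b - f a - u"
    using assms(1,2) fixed swap by (simp add: r_def u_def linear_diff)
  then have "r + g r = - (2 *\<^sub>R u)"
    by (simp add: r_def scaleR_2)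
  then have "2 * norm u \<le> norm r + norm (g r)"
    by (metis norm_minus_cancel norm_scaleR norm_triangle_ineq abs_numeral)
  then have u_small: "norm u \<le> e * norm (a - b)"
    using approx norm_g by (simp add: r_def u_def)
  have "norm (a - b) \<le> C * norm u"
    using bound[of u] inverse by (simp add: u_def)
  also have "\<dots> \<le> C * e * norm (a - b)"
    using u_small \<open>0 \<le> C\<close> by (simp add: mult_left_mono mult.assoc)
  finally have "(1 - C * e) * norm (a - b) \<le> 0"
    by (simp add: algebra_simps)
  with \<open>C * e < 1\<close> have "norm (a - b) = 0"
    by (simp add: mult_le_0_iff)
  then show ?thesis by simp
qed

definition locally_contained :: "'a::metric_space set \<Rightarrow> 'a set \<Rightarrow> 'a \<Rightarrow> bool" where
  "locally_contained M H y \<longleftrightarrow> (\<exists>\<epsilon>>0. M \<inter> ball y \<epsilon> \<subseteq> H)"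

lemma openin_locally_contained:
  fixes M :: "'a::metric_space set"
  shows "openin (top_of_set M) {z \<in> M. locally_contained M H z}"
  unfolding openin_euclidean_subtopology_iff
proof (intro conjI ballI)
  fix z assume "z \<in> {z \<in> M. locally_contained M H z}"
  then obtain \<epsilon> where "\<epsilon> > 0" and \<epsilon>: "M \<inter> ball z \<epsilon> \<subseteq> H"
    by (auto simp: locally_contained_def)
  show "\<exists>e>0. \<forall>z'\<in>M. dist z' z < e \<longrightarrow> z' \<in> {z \<in> M. locally_contained M H z}"
  proof (intro exI[of _ \<epsilon>] conjI ballI impI)
    fix z' assume "z' \<in> M" "dist z' z < \<epsilon>"
    have "ball z' (\<epsilon> - dist z' z) \<subseteq> ball z \<epsilon>"
    proof
      fix x assume "x \<in> ball z' (\<epsilon> - dist z' z)"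
      moreover have "dist z x \<le> dist z z' + dist z' x"
        by (rule dist_triangle)
      ultimately show "x \<in> ball z \<epsilon>"
        by (simp add: dist_commute)
    qed
    then have "M \<inter> ball z' (\<epsilon> - dist z' z) \<subseteq> H"
      using \<epsilon> by blast
    then show "z' \<in> {z \<in> M. locally_contained M H z}"
      using \<open>z' \<in> M\<close> \<open>dist z' z < \<epsilon>\<close> unfolding locally_contained_def
      by (metis (mono_tags, lifting) diff_gt_0_iff_gt mem_Collect_eq)
  qed (rule \<open>\<epsilon> > 0\<close>)
qed auto

lemma connected_locally_contained_imp_subset:
  fixes M :: "'a::metric_space set"
  assumes "connected M"
    and closed: "\<And>y. y \<in> M \<Longrightarrow> y \<in> closure {z \<in> M. locally_contained M H z} \<Longrightarrow>
                 locally_contained M H y"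
    and "y0 \<in> M" "locally_contained M H y0"
  shows "M \<subseteq> H"
proof -
  define T where "T = {z \<in> M. locally_contained M H z}"
  have "T = M \<inter> closure T"
    using closed closure_subset[of T] by (auto simp: T_def)
  then have "closedin (top_of_set M) T"
    by (metis closedin_closed closed_closure)
  moreover have "T \<noteq> {}"
    using assms(3,4) by (auto simp: T_def)
  ultimately have "T = M"
    using \<open>connected M\<close> openin_locally_contained[of M H]
    by (auto simp: connected_clopen T_def)
  then show ?thesis
    by (force simp: T_def locally_contained_def)
qed

locale C1_slice_chart =
  fixes M U W V :: "'a::euclidean_space set" and \<phi> \<psi> :: "'a \<Rightarrow> 'a"
    and \<phi>' \<psi>' :: "'a \<Rightarrow> 'a \<Rightarrow>\<^sub>L 'a"
  assumes open_U: "open U" and open_W: "open W" and subspace_V: "subspace V"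
    and \<psi>_\<phi>: "\<And>z. z \<in> U \<Longrightarrow> \<psi> (\<phi> z) = z"
    and \<phi>_\<psi>: "\<And>w. w \<in> W \<Longrightarrow> \<phi> (\<psi> w) = w"
    and image_slice: "\<phi> ` (M \<inter> U) = W \<inter> V"
    and \<phi>_deriv: "\<And>z. z \<in> U \<Longrightarrow> (\<phi> has_derivative blinfun_apply (\<phi>' z)) (at z)"
    and \<psi>_deriv: "\<And>w. w \<in> W \<Longrightarrow> (\<psi> has_derivative blinfun_apply (\<psi>' w)) (at w)"
    and \<psi>'_cont: "continuous_on W \<psi>'"
begin

lemma \<psi>_slice:
  assumes "w \<in> W \<inter> V"
  shows "\<psi> w \<in> M \<inter> U"
proof -
  obtain z where "z \<in> M \<inter> U" "w = \<phi> z"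
    using assms image_slice by blast
  then show ?thesis
    by (simp add: \<psi>_\<phi>)
qed

lemma \<phi>_slice: "z \<in> M \<inter> U \<Longrightarrow> \<phi> z \<in> W \<inter> V"
  using image_slice by blast

lemma continuous_\<phi>: "z \<in> U \<Longrightarrow> continuous (at z) \<phi>"
  using \<phi>_deriv has_derivative_continuous by blast

lemma continuous_\<psi>: "w \<in> W \<Longrightarrow> continuous (at w) \<psi>"
  using \<psi>_deriv has_derivative_continuous by blast

lemma derivative_left_inverse:
  assumes "z \<in> U" "\<phi> z \<in> W"
  shows "\<phi>' z (\<psi>' (\<phi> z) v) = v"
proof -
  have "(\<phi> has_derivative \<phi>' z) (at (\<psi> (\<phi> z)))"
    using \<phi>_deriv assms(1) by (simp add: \<psi>_\<phi>)
  then have "((\<lambda>w. \<phi> (\<psi> w)) has_derivative (\<lambda>v. \<phi>' z (\<psi>' (\<phi> z) v))) (at (\<phi> z))"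
    by (rule has_derivative_compose[OF \<psi>_deriv[OF assms(2)]])
  then have "((\<lambda>w. w) has_derivative (\<lambda>v. \<phi>' z (\<psi>' (\<phi> z) v))) (at (\<phi> z))"
    by (rule has_derivative_transform_within_open[OF _ open_W assms(2)]) (simp add: \<phi>_\<psi>)
  then have "(\<lambda>v. \<phi>' z (\<psi>' (\<phi> z) v)) = (\<lambda>v. v)"
    using has_derivative_ident by (rule has_derivative_unique)
  then show ?thesis
    by (simp add: fun_eq_iff)
qed

lemma slice_points_near:
  assumes "y \<in> M \<inter> U" "y \<in> closure {z \<in> M. locally_contained M H z}" "r > 0"
  obtains w' \<epsilon> where "w' \<in> W \<inter> V" "dist w' (\<phi> y) < r" "\<epsilon> > 0"
    "\<And>w. w \<in> V \<inter> ball w' \<epsilon> \<Longrightarrow> \<psi> w \<in> H"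
proof -
  obtain s where "s > 0" and s: "\<And>z. dist z y < s \<Longrightarrow> dist (\<phi> z) (\<phi> y) < r"
    using continuous_\<phi> assms(1,3) unfolding continuous_at_eps_delta by blast
  obtain t where "t > 0" "ball y t \<subseteq> U"
    using assms(1) open_U open_contains_ball by blast
  then have "min s t > 0"
    using \<open>s > 0\<close> by simp
  then obtain y' where y': "y' \<in> M" "locally_contained M H y'" "dist y' y < min s t"
    using assms(2) unfolding closure_approachable by blast
  then obtain \<epsilon>1 where "\<epsilon>1 > 0" and \<epsilon>1: "M \<inter> ball y' \<epsilon>1 \<subseteq> H"
    unfolding locally_contained_def by blast
  have "y' \<in> U"
    using y'(3) \<open>ball y t \<subseteq> U\<close> by (auto simp: dist_commute)
  define w' where "w' = \<phi> y'"
  have w': "w' \<in> W \<inter> V" "\<psi> w' = y'"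
    using \<phi>_slice \<psi>_\<phi> y'(1) \<open>y' \<in> U\<close> by (auto simp: w'_def)
  have "\<exists>d>0. \<forall>w. dist w w' < d \<longrightarrow> dist (\<psi> w) (\<psi> w') < \<epsilon>1"
    using continuous_\<psi> w'(1) \<open>\<epsilon>1 > 0\<close> unfolding continuous_at_eps_delta by blast
  then obtain \<epsilon>2 where "\<epsilon>2 > 0" and \<epsilon>2: "\<And>w. dist w w' < \<epsilon>2 \<Longrightarrow> dist (\<psi> w) y' < \<epsilon>1"
    using w'(2) by auto
  obtain \<epsilon>3 where "\<epsilon>3 > 0" "ball w' \<epsilon>3 \<subseteq> W"
    using w'(1) open_W open_contains_ball by blast
  define \<epsilon> where "\<epsilon> = min \<epsilon>2 \<epsilon>3"
  have "\<psi> w \<in> H" if "w \<in> V \<inter> ball w' \<epsilon>" for w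
  proof -
    have "w \<in> W \<inter> V"
      using that \<open>ball w' \<epsilon>3 \<subseteq> W\<close> by (auto simp: \<epsilon>_def)
    then have "\<psi> w \<in> M"
      using \<psi>_slice by blast
    moreover have "dist (\<psi> w) y' < \<epsilon>1"
      using that \<epsilon>2 by (simp add: \<epsilon>_def dist_commute)
    ultimately show ?thesis
      using \<epsilon>1 by (auto simp: dist_commute)
  qed
  moreover have "dist w' (\<phi> y) < r"
    using s y'(3) by (simp add: w'_def)
  moreover have "\<epsilon> > 0"
    using \<open>\<epsilon>2 > 0\<close> \<open>\<epsilon>3 > 0\<close> by (simp add: \<epsilon>_def)
  ultimately show ?thesis
    using that w'(1) by blast
qed

lemma tangent_in_kernel:
  fixes l :: "'a \<Rightarrow> real"
  assumes l: "bounded_linear l" and y: "y \<in> M \<inter> U"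
    and near: "y \<in> closure {z \<in> M. locally_contained M {x. l x = 0} z}" and "v \<in> V"
  shows "l (\<psi>' (\<phi> y) v) = 0"
proof (rule ccontr)
  define h where "h w = l (\<psi>' w v)" for w
  assume "l (\<psi>' (\<phi> y) v) \<noteq> 0"
  then have "\<bar>h (\<phi> y)\<bar> > 0"
    by (simp add: h_def)
  have "\<phi> y \<in> W"
    using \<phi>_slice y by blast
  then have "continuous (at (\<phi> y)) \<psi>'"
    using \<psi>'_cont open_W by (simp add: continuous_on_eq_continuous_at)
  then have "continuous (at (\<phi> y)) (\<lambda>w. \<psi>' w v)"
    by (rule bounded_bilinear.continuous[OF bounded_bilinear_blinfun_apply _ continuous_const])
  then have "continuous (at (\<phi> y)) h"
    unfolding h_def by (rule bounded_linear.continuous[OF l])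
  then obtain r where "r > 0" and r: "\<And>w. dist w (\<phi> y) < r \<Longrightarrow> \<bar>h w - h (\<phi> y)\<bar> < \<bar>h (\<phi> y)\<bar>"
    using \<open>\<bar>h (\<phi> y)\<bar> > 0\<close> unfolding continuous_at_eps_delta dist_real_def by blast
  obtain w' \<epsilon> where w': "w' \<in> W \<inter> V" "dist w' (\<phi> y) < r" "\<epsilon> > 0"
    and zero: "\<And>w. w \<in> V \<inter> ball w' \<epsilon> \<Longrightarrow> \<psi> w \<in> {x. l x = 0}"
    by (rule slice_points_near[OF y near \<open>r > 0\<close>]) (rule that)
  have "w' \<in> W" "w' \<in> V"
    using w'(1) by auto
  have "((\<lambda>w. l (\<psi> w)) has_derivative (\<lambda>u. l (\<psi>' w' u))) (at w')"
    by (rule bounded_linear.has_derivative[OF l \<psi>_deriv[OF \<open>w' \<in> W\<close>]])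
  moreover have "l (\<psi> w) = l (\<psi> w')" if "w \<in> V" "dist w w' < \<epsilon>" for w
    using zero[of w] zero[of w'] that \<open>w' \<in> V\<close> \<open>\<epsilon> > 0\<close> by (simp add: dist_commute)
  ultimately have "h w' = 0"
    unfolding h_def
    by (rule has_derivative_zero_if_constant_on_subspace[OF _ subspace_V \<open>w' \<in> V\<close> \<open>\<epsilon> > 0\<close> _ \<open>v \<in> V\<close>])
  then show False
    using r[OF w'(2)] by simp
qed

lemma chart_linearization:
  assumes "y \<in> M \<inter> U" "e > 0"
  obtains \<rho> where "\<rho> > 0" "ball y \<rho> \<subseteq> U"
    "\<And>z z'. z \<in> ball y \<rho> \<Longrightarrow> z' \<in> ball y \<rho> \<Longrightarrow>
       norm (z - z' - \<psi>' (\<phi> y) (\<phi> z - \<phi> z')) \<le> e * norm (\<phi> z - \<phi> z')"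
proof -
  have "\<phi> y \<in> W"
    using \<phi>_slice assms(1) by blast
  then have "continuous (at (\<phi> y)) \<psi>'"
    using \<psi>'_cont open_W by (simp add: continuous_on_eq_continuous_at)
  then obtain r where "r > 0" "ball (\<phi> y) r \<subseteq> W"
    and approx: "\<And>a b. a \<in> ball (\<phi> y) r \<Longrightarrow> b \<in> ball (\<phi> y) r \<Longrightarrow>
                   norm (\<psi> a - \<psi> b - \<psi>' (\<phi> y) (a - b)) \<le> e * norm (a - b)"
    using continuous_derivative_linearization_bound[OF open_W \<open>\<phi> y \<in> W\<close> \<psi>_deriv _ \<open>e > 0\<close>]
    by blast
  have "\<exists>s>0. \<forall>z. dist z y < s \<longrightarrow> dist (\<phi> z) (\<phi> y) < r"
    using continuous_\<phi> assms(1) \<open>r > 0\<close> unfolding continuous_at_eps_delta by blast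
  then obtain s where "s > 0" and s: "\<And>z. dist z y < s \<Longrightarrow> \<phi> z \<in> ball (\<phi> y) r"
    by (auto simp: dist_commute)
  obtain t where "t > 0" "ball y t \<subseteq> U"
    using assms(1) open_U open_contains_ball by blast
  have "norm (z - z' - \<psi>' (\<phi> y) (\<phi> z - \<phi> z')) \<le> e * norm (\<phi> z - \<phi> z')"
    if "z \<in> ball y (min s t)" "z' \<in> ball y (min s t)" for z z'
  proof -
    have "z \<in> U" "z' \<in> U"
      using that \<open>ball y t \<subseteq> U\<close> by auto
    moreover have "\<phi> z \<in> ball (\<phi> y) r" "\<phi> z' \<in> ball (\<phi> y) r"
      using that s[of z] s[of z'] by (simp_all add: dist_commute)
    ultimately show ?thesis
      using approx[of "\<phi> z" "\<phi> z'"] by (simp add: \<psi>_\<phi>)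
  qed
  moreover have "min s t > 0" "ball y (min s t) \<subseteq> U"
    using \<open>s > 0\<close> \<open>t > 0\<close> \<open>ball y t \<subseteq> U\<close> by auto
  ultimately show ?thesis
    using that by blast
qed

lemma isometric_involution_fixes_nbhd:
  fixes g :: "'a \<Rightarrow> 'a"
  assumes g: "linear g" "\<And>x. g (g x) = x" "\<And>x. norm (g x) = norm x"
    and y: "y \<in> M \<inter> U" "g y = y"
    and "\<delta> > 0" and invariant: "\<And>z. z \<in> M \<inter> ball y \<delta> \<Longrightarrow> g z \<in> M"
    and tangent_fixed: "\<And>v. v \<in> V \<Longrightarrow> g (\<psi>' (\<phi> y) v) = \<psi>' (\<phi> y) v"
  shows "locally_contained M {z. g z = z} y"
proof -
  define C where "C = norm (\<phi>' y)"
  define e where "e = 1 / (2 * (C + 1))"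
  have "C \<ge> 0"
    by (simp add: C_def)
  then have "e > 0" "C * e < 1"
    by (simp_all add: e_def field_simps)
  then obtain \<rho> where "\<rho> > 0" "ball y \<rho> \<subseteq> U"
    and approx: "\<And>z z'. z \<in> ball y \<rho> \<Longrightarrow> z' \<in> ball y \<rho> \<Longrightarrow>
       norm (z - z' - \<psi>' (\<phi> y) (\<phi> z - \<phi> z')) \<le> e * norm (\<phi> z - \<phi> z')"
    using chart_linearization[OF y(1)] by blast
  have "g z = z" if z: "z \<in> M \<inter> ball y (min \<rho> \<delta>)" for z
  proof -
    have "dist (g z) y = dist z y"
      using g y(2) by (metis dist_norm linear_diff)
    then have gz: "g z \<in> M \<inter> ball y (min \<rho> \<delta>)"
      using z invariant[of z] by (auto simp: dist_commute)
    have "z \<in> M \<inter> U" "g z \<in> M \<inter> U"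
      using z gz \<open>ball y \<rho> \<subseteq> U\<close> by auto
    define a b where "a = \<phi> z" and "b = \<phi> (g z)"
    have ab: "a \<in> V" "b \<in> V" "\<psi> a = z" "\<psi> b = g z"
      using \<phi>_slice \<psi>_\<phi> \<open>z \<in> M \<inter> U\<close> \<open>g z \<in> M \<inter> U\<close> by (auto simp: a_def b_def)
    have "a = b"
    proof (rule eq_if_isometric_involution_swaps_values[OF g])
      show "\<psi> b = g (\<psi> a)"
        using ab by simp
      show "g (\<psi>' (\<phi> y) (a - b)) = \<psi>' (\<phi> y) (a - b)"
        using tangent_fixed ab subspace_V by (simp add: subspace_diff)
      show "norm (\<psi> a - \<psi> b - \<psi>' (\<phi> y) (a - b)) \<le> e * norm (a - b)"
        using approx[of z "g z"] z gz ab by (simp add: a_def b_def)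
      show "\<phi>' y (\<psi>' (\<phi> y) (a - b)) = a - b"
        using derivative_left_inverse y(1) \<phi>_slice by blast
      show "norm (\<phi>' y u) \<le> C * norm u" for u
        by (simp add: C_def norm_blinfun)
    qed fact+
    then show ?thesis
      using ab by simp
  qed
  moreover have "min \<rho> \<delta> > 0"
    using \<open>\<rho> > 0\<close> \<open>\<delta> > 0\<close> by simp
  ultimately show ?thesis
    unfolding locally_contained_def by blast
qed

end

lemma C2_submanifold_obtain_chart:
  fixes M :: "'a::euclidean_space set"
  assumes "C2_submanifold M" "y \<in> M"
  obtains U W V \<phi> \<psi> \<phi>' \<psi>' where "C1_slice_chart M U W V \<phi> \<psi> \<phi>' \<psi>'" "y \<in> U"
proof -
  obtain U W V and \<phi> \<psi> :: "'a \<Rightarrow> 'a" where chart: "open U" "y \<in> U" "open W" "subspace V"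
      "C2_on \<phi> U" "C2_on \<psi> W" "\<forall>z\<in>U. \<psi> (\<phi> z) = z" "\<forall>w\<in>W. \<phi> (\<psi> w) = w"
      "\<phi> ` (M \<inter> U) = W \<inter> V"
    using assms(1)[unfolded C2_submanifold_def, rule_format, OF assms(2)] by blast
  obtain \<phi>' where \<phi>': "\<forall>z\<in>U. (\<phi> has_derivative blinfun_apply (\<phi>' z)) (at z)"
    using chart(5) unfolding C2_on_def by blast
  obtain \<psi>' \<psi>'' where \<psi>': "\<forall>w\<in>W. (\<psi> has_derivative blinfun_apply (\<psi>' w)) (at w)"
      and \<psi>'': "\<forall>w\<in>W. (\<psi>' has_derivative blinfun_apply (\<psi>'' w)) (at w)"
    using chart(6) unfolding C2_on_def by blast
  have "continuous_on W \<psi>'"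
    using \<psi>'' has_derivative_continuous by (blast intro: continuous_at_imp_continuous_on)
  have "C1_slice_chart M U W V \<phi> \<psi> \<phi>' \<psi>'"
    by unfold_locales (use chart \<phi>' \<psi>' \<open>continuous_on W \<psi>'\<close> in simp_all)
  then show ?thesis
    using that chart(2) by blast
qed

lemma locally_symmetric_transpose_invariant:
  assumes "locally_symmetric M" "x \<in> M" "x $ p = x $ q"
  obtains \<delta> where "\<delta> > 0" "\<And>z. z \<in> M \<inter> ball x \<delta> \<Longrightarrow> perm_act (Transposition.transpose p q) z \<in> M"
proof -
  obtain \<delta> where "\<delta> > 0" and sym: "\<forall>y\<in>M \<inter> ball x \<delta>. \<forall>\<sigma>.
        \<sigma> permutes (UNIV :: 'a set) \<and> perm_act \<sigma> y = y \<longrightarrow>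
        perm_act \<sigma> ` (M \<inter> ball x \<delta>) = M \<inter> ball x \<delta>"
    using assms(1,2) unfolding locally_symmetric_def by blast
  have "x \<in> M \<inter> ball x \<delta>"
    using assms(2) \<open>\<delta> > 0\<close> by simp
  moreover have "perm_act (Transposition.transpose p q) x = x"
    using assms(3) by (simp add: perm_act_transpose_fixed_iff)
  ultimately have "perm_act (Transposition.transpose p q) ` (M \<inter> ball x \<delta>) = M \<inter> ball x \<delta>"
    using sym permutes_swap_id[of p UNIV q] by blast
  then show ?thesis
    using that \<open>\<delta> > 0\<close> by blast
qed

lemma locally_contained_coordinate_eq_closed:
  fixes M :: "(real^'n::{finite,linorder}) set" and p q :: 'n
  defines "H \<equiv> {w. w $ p = w $ q}"
  assumes "C2_submanifold M" "locally_symmetric M" "y \<in> M"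
    and near: "y \<in> closure {z \<in> M. locally_contained M H z}"
  shows "locally_contained M H y"
proof -
  define g where "g = perm_act (Transposition.transpose p q)"
  have "closed H"
    unfolding H_def by (intro closed_Collect_eq continuous_on_component continuous_on_id)
  then have "y \<in> H"
    using near closure_minimal[of "{z \<in> M. locally_contained M H z}" H]
    by (force simp: locally_contained_def)
  then obtain \<delta> where "\<delta> > 0" and invariant: "\<And>z. z \<in> M \<inter> ball y \<delta> \<Longrightarrow> g z \<in> M"
    using locally_symmetric_transpose_invariant[OF assms(3,4)] by (auto simp: H_def g_def)
  obtain U W V \<phi> \<psi> \<phi>' \<psi>' where "C1_slice_chart M U W V \<phi> \<psi> \<phi>' \<psi>'" "y \<in> U"
    using C2_submanifold_obtain_chart[OF assms(2,4)] by blast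
  then interpret C1_slice_chart M U W V \<phi> \<psi> \<phi>' \<psi>'
    by simp
  have H_kernel: "H = {w. w $ p - w $ q = 0}"
    by (simp add: H_def)
  have "bounded_linear (\<lambda>w. w $ p - w $ q :: real)"
    by (intro bounded_linear_sub bounded_linear_vec_nth)
  from tangent_in_kernel[OF this] have tangent: "\<psi>' (\<phi> y) v \<in> H" if "v \<in> V" for v
    using that near \<open>y \<in> U\<close> \<open>y \<in> M\<close> by (simp add: H_kernel)
  have "locally_contained M {z. g z = z} y"
  proof (rule isometric_involution_fixes_nbhd)
    show "linear g"
      by (simp add: g_def linear_perm_act)
    show "g (g x) = x" "norm (g x) = norm x" for x
      by (simp_all add: g_def norm_perm_act permutes_swap_id)
    show "g y = y"
      using \<open>y \<in> H\<close> by (simp add: g_def H_def perm_act_transpose_fixed_iff)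
    show "g (\<psi>' (\<phi> y) v) = \<psi>' (\<phi> y) v" if "v \<in> V" for v
      using tangent[OF that] by (simp add: g_def H_def perm_act_transpose_fixed_iff)
  qed (use \<open>y \<in> M\<close> \<open>y \<in> U\<close> \<open>\<delta> > 0\<close> invariant in auto)
  then show ?thesis
    by (simp add: g_def H_def perm_act_transpose_fixed_iff)
qed

lemma locally_symmetric_C2_submanifold_coordinate_eq:
  fixes M :: "(real^'n::{finite,linorder}) set"
  assumes M: "locally_symmetric_C2_submanifold M"
    and "y \<in> M" "locally_contained M {w. w $ p = w $ q} y"
  shows "\<forall>w\<in>M. w $ p = w $ q"
proof -
  have "connected M" "C2_submanifold M" "locally_symmetric M"
    using M by (simp_all add: locally_symmetric_C2_submanifold_def)
  then have "M \<subseteq> {w. w $ p = w $ q}"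
    using connected_locally_contained_imp_subset[OF _ locally_contained_coordinate_eq_closed assms(2,3)]
    by blast
  then show ?thesis
    by blast
qed

lemma Delta_coordinate_eq:
  assumes "w \<in> Delta \<sigma>"
  shows "w $ \<sigma> m = w $ m"
proof -
  have "{j. w $ j = w $ m} \<in> perm_partition \<sigma>"
    using assms unfolding Delta_def vec_partition_def by blast
  then obtain c where c: "{j. w $ j = w $ m} = {j. \<exists>n. (\<sigma> ^^ n) c = j}"
    unfolding perm_partition_def by blast
  then obtain n where "(\<sigma> ^^ n) c = m"
    by blast
  then have "(\<sigma> ^^ Suc n) c = \<sigma> m"
    by simp
  then show ?thesis
    using c by blast
qed

lemma characteristic_perm_orbit_coordinate_eq:
  fixes M :: "(real^'n::{finite,linorder}) set"
  assumes M: "locally_symmetric_C2_submanifold M" and "characteristic_perm M \<sigma>" and "w \<in> M"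
  shows "w $ (\<sigma> ^^ n) b = w $ b"
proof -
  obtain xb \<delta> where "xb \<in> M" "\<delta> > 0" and near: "M \<inter> ball xb \<delta> \<subseteq> Delta \<sigma>"
    using assms(2) unfolding characteristic_perm_def by blast
  have "\<forall>w\<in>M. w $ \<sigma> m = w $ m" for m
  proof (rule locally_symmetric_C2_submanifold_coordinate_eq[OF M \<open>xb \<in> M\<close>])
    show "locally_contained M {w. w $ \<sigma> m = w $ m} xb"
      using near Delta_coordinate_eq \<open>\<delta> > 0\<close> unfolding locally_contained_def by blast
  qed
  then show ?thesis
    using \<open>w \<in> M\<close> by (induction n) simp_all
qed

lemma locally_symmetric_C2_submanifold_coordinate_eq_between:
  fixes M :: "(real^'n::{finite,linorder}) set"
  assumes M: "locally_symmetric_C2_submanifold M"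
    and eq: "\<forall>w\<in>M. w $ i = w $ k" and "i \<le> j" "j \<le> k"
  shows "\<forall>w\<in>M. w $ i = w $ j"
proof (cases "i = j \<or> j = k")
  case True
  then show ?thesis
    using eq by auto
next
  case False
  then have "i \<noteq> j" "j \<noteq> k" "i \<noteq> k"
    using \<open>i \<le> j\<close> \<open>j \<le> k\<close> by auto
  have "locally_symmetric M"
    using M by (simp add: locally_symmetric_C2_submanifold_def)
  then obtain x where x: "x \<in> M" "x \<in> ordered_cone"
    unfolding locally_symmetric_def by blast
  then have "x $ j \<le> x $ i" "x $ k \<le> x $ j"
    using \<open>i \<le> j\<close> \<open>j \<le> k\<close> unfolding ordered_cone_def by blast+
  moreover have "x $ i = x $ k"
    using eq x(1) by blast
  ultimately have "x $ j = x $ k"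
    by linarith
  then obtain \<delta> where "\<delta> > 0"
    and invariant: "\<And>z. z \<in> M \<inter> ball x \<delta> \<Longrightarrow> perm_act (Transposition.transpose j k) z \<in> M"
    using locally_symmetric_transpose_invariant[OF \<open>locally_symmetric M\<close> x(1)] by blast
  have "M \<inter> ball x \<delta> \<subseteq> {w. w $ i = w $ j}"
  proof
    fix w assume "w \<in> M \<inter> ball x \<delta>"
    then have "perm_act (Transposition.transpose j k) w $ i = perm_act (Transposition.transpose j k) w $ k"
      using eq invariant by blast
    then show "w \<in> {w. w $ i = w $ j}"
      using \<open>i \<noteq> j\<close> \<open>i \<noteq> k\<close> by (simp add: Transposition.transpose_def)
  qed
  then show ?thesis
    using locally_symmetric_C2_submanifold_coordinate_eq[OF M x(1)] \<open>\<delta> > 0\<close>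
    unfolding locally_contained_def by blast
qed

theorem theorem3p28:
  fixes M :: "(real^'n::{finite,linorder}) set" and \<sigma> :: "'n \<Rightarrow> 'n"
  assumes "locally_symmetric_C2_submanifold M"
    and "characteristic_perm M \<sigma>"
  shows "\<forall>B\<in>perm_partition \<sigma>. \<forall>i j k. i \<in> B \<and> k \<in> B \<and> i \<le> j \<and> j \<le> k \<longrightarrow> j \<in> B"
proof (intro ballI allI impI)
  fix B i j k
  assume "B \<in> perm_partition \<sigma>" and ijk: "i \<in> B \<and> k \<in> B \<and> i \<le> j \<and> j \<le> k"
  then obtain b where B: "B = {m. \<exists>n. (\<sigma> ^^ n) b = m}"
    unfolding perm_partition_def by blast
  then have "\<forall>w\<in>M. w $ i = w $ k"
    using ijk characteristic_perm_orbit_coordinate_eq[OF assms] by auto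
  then have eq: "\<forall>w\<in>M. w $ i = w $ j"
    using locally_symmetric_C2_submanifold_coordinate_eq_between[OF assms(1)] ijk by blast
  obtain xb \<delta> where "xb \<in> M" "\<delta> > 0" "M \<inter> ball xb \<delta> \<subseteq> Delta \<sigma>"
    using assms(2) unfolding characteristic_perm_def by blast
  then have "B \<in> vec_partition xb"
    using \<open>B \<in> perm_partition \<sigma>\<close> by (force simp: Delta_def)
  then obtain c where "B = {m. xb $ m = xb $ c}"
    unfolding vec_partition_def by blast
  then show "j \<in> B"
    using ijk eq \<open>xb \<in> M\<close> by auto
qed

end
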